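(* Let $\mathcal{D}=\mathcal{P}_{\mathcal{D}}\cup\mathcal{L}_{\mathcal{D}}$ be a stable dominating set of the incidence graph of an arbitrary projective plane $\Pi_q$ of order $q$ with $|\mathcal{D}|<3q-1$. Suppose there is a point $P$ with $|[P]\cap\mathcal{L}_{\mathcal{D}}|=q+1$. Then one of the following holds: (1) $\mathcal{L}_{\mathcal{D}}=[P]$, $P\notin\mathcal{P}_{\mathcal{D}}$, and $\mathcal{P}_{\mathcal{D}}\cup\{P\}$ is a blocking set of $\Pi_q$ in which every point other than possibly $P$ is essential; (2) there is a unique line $\ell$ not through $P$ such that $\mathcal{L}_{\mathcal{D}}=[P]\cup\{\ell\}$, $P\notin\mathcal{P}_{\mathcal{D}}$, and $\mathcal{P}_{\mathcal{D}}\cup\{P\}$ is a blocking set of the affine plane $\Pi_q\setminus\ell$ in which every point other than possibly $P$ is essential.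
   Context: A dominating set $\mathcal{D}=\mathcal{P}_{\mathcal{D}}\cup\mathcal{L}_{\mathcal{D}}$ of the incidence graph of $\Pi_q$ is a set of points and lines such that every point not in $\mathcal{P}_{\mathcal{D}}$ lies on a line of $\mathcal{L}_{\mathcal{D}}$ and every line not in $\mathcal{L}_{\mathcal{D}}$ contains a point of $\mathcal{P}_{\mathcal{D}}$. $\mathcal{D}$ is stable if it is minimal (no proper subset dominating) and there is no dominating set $\mathcal{D}'\supset\mathcal{D}$ with $|\mathcal{D}'|=|\mathcal{D}|+1$ that contains a dominating set of size less than $|\mathcal{D}|$. $[P]$ is the set of lines through $P$. A blocking set (of a projective or affine plane) is a point set meeting every line of that plane; a point $Q$ of a blocking set $\mathcal{B}$ is essential if $\mathcal{B}\setminus\{Q\}$ is not a blocking set. $\Pi_q\setminus\ell$ denotes the affine plane obtained by deleting the line $\ell$ and its points. *)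

theory Defs
  imports Main
begin

definition projective_plane ::
  "'p set \<Rightarrow> 'l set \<Rightarrow> ('p \<Rightarrow> 'l \<Rightarrow> bool) \<Rightarrow> nat \<Rightarrow> bool" where
  "projective_plane Pts Lns I q \<longleftrightarrow>
     finite Pts \<and> finite Lns \<and> q \<ge> 2 \<and>
     (\<forall>P\<in>Pts. \<forall>Q\<in>Pts. P \<noteq> Q \<longrightarrow> (\<exists>!l. l \<in> Lns \<and> I P l \<and> I Q l)) \<and>
     (\<forall>l\<in>Lns. \<forall>m\<in>Lns. l \<noteq> m \<longrightarrow> (\<exists>!P. P \<in> Pts \<and> I P l \<and> I P m)) \<and>
     (\<forall>l\<in>Lns. card {P\<in>Pts. I P l} = q + 1) \<and>
     (\<forall>P\<in>Pts. card {l\<in>Lns. I P l} = q + 1)"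

definition pencil :: "'l set \<Rightarrow> ('p \<Rightarrow> 'l \<Rightarrow> bool) \<Rightarrow> 'p \<Rightarrow> 'l set" where
  "pencil Lns I P = {l\<in>Lns. I P l}"

definition dominating ::
  "'p set \<Rightarrow> 'l set \<Rightarrow> ('p \<Rightarrow> 'l \<Rightarrow> bool) \<Rightarrow> 'p set \<Rightarrow> 'l set \<Rightarrow> bool" where
  "dominating Pts Lns I PD LD \<longleftrightarrow>
     PD \<subseteq> Pts \<and> LD \<subseteq> Lns \<and>
     (\<forall>P\<in>Pts - PD. \<exists>l\<in>LD. I P l) \<and>
     (\<forall>l\<in>Lns - LD. \<exists>P\<in>PD. I P l)"

definition minimal_dominating ::
  "'p set \<Rightarrow> 'l set \<Rightarrow> ('p \<Rightarrow> 'l \<Rightarrow> bool) \<Rightarrow> 'p set \<Rightarrow> 'l set \<Rightarrow> bool" where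
  "minimal_dominating Pts Lns I PD LD \<longleftrightarrow>
     dominating Pts Lns I PD LD \<and>
     \<not> (\<exists>PD' LD'. PD' \<subseteq> PD \<and> LD' \<subseteq> LD \<and> (PD', LD') \<noteq> (PD, LD) \<and>
                   dominating Pts Lns I PD' LD')"

(* |D| = |PD| + |LD| (points and lines are distinct vertices) *)
definition stable_dominating ::
  "'p set \<Rightarrow> 'l set \<Rightarrow> ('p \<Rightarrow> 'l \<Rightarrow> bool) \<Rightarrow> 'p set \<Rightarrow> 'l set \<Rightarrow> bool" where
  "stable_dominating Pts Lns I PD LD \<longleftrightarrow>
     minimal_dominating Pts Lns I PD LD \<and>
     \<not> (\<exists>PD' LD'. PD \<subseteq> PD' \<and> LD \<subseteq> LD' \<and>
          dominating Pts Lns I PD' LD' \<and>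
          card PD' + card LD' = card PD + card LD + 1 \<and>
          (\<exists>PD'' LD''. PD'' \<subseteq> PD' \<and> LD'' \<subseteq> LD' \<and>
             dominating Pts Lns I PD'' LD'' \<and>
             card PD'' + card LD'' < card PD + card LD))"

definition blocking_set ::
  "'p set \<Rightarrow> 'l set \<Rightarrow> ('p \<Rightarrow> 'l \<Rightarrow> bool) \<Rightarrow> 'p set \<Rightarrow> bool" where
  "blocking_set Pts Lns I B \<longleftrightarrow> B \<subseteq> Pts \<and> (\<forall>l\<in>Lns. \<exists>P\<in>B. I P l)"

definition essential ::
  "'p set \<Rightarrow> 'l set \<Rightarrow> ('p \<Rightarrow> 'l \<Rightarrow> bool) \<Rightarrow> 'p set \<Rightarrow> 'p \<Rightarrow> bool" where
  "essential Pts Lns I B Q \<longleftrightarrow> Q \<in> B \<and> \<not> blocking_set Pts Lns I (B - {Q})"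

definition aff_points :: "'p set \<Rightarrow> ('p \<Rightarrow> 'l \<Rightarrow> bool) \<Rightarrow> 'l \<Rightarrow> 'p set" where
  "aff_points Pts I l = {P\<in>Pts. \<not> I P l}"

definition aff_lines :: "'l set \<Rightarrow> 'l \<Rightarrow> 'l set" where
  "aff_lines Lns l = Lns - {l}"

end

theory Submission
  imports Defs
begin

text \<open>
  Since every line through \<open>P\<close> lies in \<open>\<L>\<^sub>D\<close>, the lines of \<open>\<L>\<^sub>D\<close> already cover every point.
  Minimality then forces every point of \<open>\<P>\<^sub>D\<close> to have a private line outside \<open>\<L>\<^sub>D\<close>
  (so \<open>P \<notin> \<P>\<^sub>D\<close>, and every point of \<open>\<P>\<^sub>D\<close> is essential), and no point of \<open>\<P>\<^sub>D\<close> lies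
  on a line of \<open>\<L>\<^sub>D\<close> outside the pencil. Two such lines \<open>l\<^sub>1, l\<^sub>2\<close> cannot exist: adding
  their common point and deleting both lines would turn a dominating set of size
  \<open>|\<D>| + 1\<close> into one of size \<open>|\<D>| - 1\<close>, contradicting stability.
\<close>

lemma dominating_if_lines_cover:
  assumes "PD \<subseteq> Pts" and "LD \<subseteq> Lns"
    and "\<forall>Q\<in>Pts. \<exists>l\<in>LD. I Q l"
    and "\<forall>l\<in>Lns - LD. \<exists>Q\<in>PD. I Q l"
  shows "dominating Pts Lns I PD LD"
  using assms unfolding dominating_def by blast

lemma minimal_dominating_no_smaller:
  assumes "minimal_dominating Pts Lns I PD LD"
    and "PD' \<subseteq> PD" and "LD' \<subseteq> LD" and "dominating Pts Lns I PD' LD'"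
  shows "PD' = PD \<and> LD' = LD"
  using assms unfolding minimal_dominating_def by blast

lemma minimal_dominating_imp_dominating:
  "minimal_dominating Pts Lns I PD LD \<Longrightarrow> dominating Pts Lns I PD LD"
  unfolding minimal_dominating_def by (rule conjunct1)

lemma stable_dominating_imp_minimal:
  "stable_dominating Pts Lns I PD LD \<Longrightarrow> minimal_dominating Pts Lns I PD LD"
  unfolding stable_dominating_def by (rule conjunct1)

lemma stable_dominating_no_shrink_after_growth:
  assumes "stable_dominating Pts Lns I PD LD"
    and "PD \<subseteq> PD'" "LD \<subseteq> LD'" "dominating Pts Lns I PD' LD'"
    and "card PD' + card LD' = card PD + card LD + 1"
    and "PD'' \<subseteq> PD'" "LD'' \<subseteq> LD'" "dominating Pts Lns I PD'' LD''"
  shows "card PD + card LD \<le> card PD'' + card LD''"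
  using assms unfolding stable_dominating_def by (meson not_le)

lemma projective_plane_lines_meet:
  assumes "projective_plane Pts Lns I q" and "l \<in> Lns" "m \<in> Lns" "l \<noteq> m"
  shows "\<exists>R\<in>Pts. I R l \<and> I R m"
proof -
  have "\<exists>!R. R \<in> Pts \<and> I R l \<and> I R m"
    using assms unfolding projective_plane_def by blast
  then show ?thesis by blast
qed

lemma finite_pencil: "projective_plane Pts Lns I q \<Longrightarrow> finite (pencil Lns I P)"
  unfolding projective_plane_def pencil_def by auto

lemma card_pencil:
  "projective_plane Pts Lns I q \<Longrightarrow> P \<in> Pts \<Longrightarrow> card (pencil Lns I P) = q + 1"
  unfolding projective_plane_def pencil_def by auto

lemma pencil_covers_points:
  assumes plane: "projective_plane Pts Lns I q" and "P \<in> Pts" and "Q \<in> Pts"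
  shows "\<exists>l\<in>pencil Lns I P. I Q l"
proof (cases "Q = P")
  case True
  have "pencil Lns I P \<noteq> {}"
    using card_pencil[OF plane \<open>P \<in> Pts\<close>] by auto
  then show ?thesis using True unfolding pencil_def by auto
next
  case False
  then obtain l where "l \<in> Lns" "I P l" "I Q l"
    using plane \<open>P \<in> Pts\<close> \<open>Q \<in> Pts\<close> unfolding projective_plane_def by metis
  then show ?thesis unfolding pencil_def by auto
qed

lemma pencil_subset_if_card_inter:
  assumes plane: "projective_plane Pts Lns I q" and "P \<in> Pts"
    and "card (pencil Lns I P \<inter> LD) = q + 1"
  shows "pencil Lns I P \<subseteq> LD"
proof -
  have "pencil Lns I P \<inter> LD = pencil Lns I P"
    using card_subset_eq[OF finite_pencil[OF plane], of "pencil Lns I P \<inter> LD"]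
      assms card_pencil[OF plane \<open>P \<in> Pts\<close>] by auto
  then show ?thesis by blast
qed

lemma minimal_dominating_private_line:
  assumes min: "minimal_dominating Pts Lns I PD LD"
    and cover: "\<forall>R\<in>Pts. \<exists>l\<in>LD. I R l"
    and Q: "Q \<in> PD"
  shows "\<exists>m\<in>Lns - LD. I Q m \<and> (\<forall>Q'\<in>PD. I Q' m \<longrightarrow> Q' = Q)"
proof (rule ccontr)
  assume "\<not> ?thesis"
  then have shared: "\<forall>m\<in>Lns - LD. I Q m \<longrightarrow> (\<exists>R\<in>PD - {Q}. I R m)" by auto
  have "PD \<subseteq> Pts" "LD \<subseteq> Lns" and blocked: "\<forall>m\<in>Lns - LD. \<exists>R\<in>PD. I R m"
    using minimal_dominating_imp_dominating[OF min] unfolding dominating_def by auto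
  have "\<forall>m\<in>Lns - LD. \<exists>R\<in>PD - {Q}. I R m"
  proof
    fix m assume m: "m \<in> Lns - LD"
    then obtain R where "R \<in> PD" "I R m" using blocked by blast
    then show "\<exists>R\<in>PD - {Q}. I R m" using shared m by (cases "R = Q") auto
  qed
  with \<open>PD \<subseteq> Pts\<close> \<open>LD \<subseteq> Lns\<close> cover have "dominating Pts Lns I (PD - {Q}) LD"
    by (intro dominating_if_lines_cover) auto
  then have "PD - {Q} = PD"
    using minimal_dominating_no_smaller[OF min, of "PD - {Q}" LD] by blast
  with Q show False by blast
qed

lemma minimal_dominating_removable_line_unmet:
  assumes min: "minimal_dominating Pts Lns I PD LD"
    and l: "l \<in> LD"
    and cover: "\<forall>R\<in>Pts. \<exists>m\<in>LD - {l}. I R m"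
  shows "\<forall>Q\<in>PD. \<not> I Q l"
proof (intro ballI notI)
  fix Q assume "Q \<in> PD" "I Q l"
  have "PD \<subseteq> Pts" "LD \<subseteq> Lns" and blocked: "\<forall>m\<in>Lns - LD. \<exists>R\<in>PD. I R m"
    using minimal_dominating_imp_dominating[OF min] unfolding dominating_def by auto
  have "\<forall>m\<in>Lns - (LD - {l}). \<exists>R\<in>PD. I R m"
    using blocked \<open>Q \<in> PD\<close> \<open>I Q l\<close> by blast
  with \<open>PD \<subseteq> Pts\<close> \<open>LD \<subseteq> Lns\<close> cover have "dominating Pts Lns I PD (LD - {l})"
    by (intro dominating_if_lines_cover) auto
  then have "LD - {l} = LD"
    using minimal_dominating_no_smaller[OF min, of PD "LD - {l}"] by blast
  with l show False by blast
qed

lemma stable_dominating_removable_lines_meet_in_PD: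
  assumes plane: "projective_plane Pts Lns I q"
    and stable: "stable_dominating Pts Lns I PD LD"
    and l12: "l\<^sub>1 \<in> LD" "l\<^sub>2 \<in> LD" "l\<^sub>1 \<noteq> l\<^sub>2"
    and cover: "\<forall>R\<in>Pts. \<exists>m\<in>LD - {l\<^sub>1, l\<^sub>2}. I R m"
  shows "\<exists>R\<in>PD. I R l\<^sub>1 \<and> I R l\<^sub>2"
proof (rule ccontr)
  assume no_meet: "\<not> ?thesis"
  have dom: "dominating Pts Lns I PD LD"
    using minimal_dominating_imp_dominating[OF stable_dominating_imp_minimal[OF stable]] .
  then have "PD \<subseteq> Pts" "LD \<subseteq> Lns" and blocked: "\<forall>m\<in>Lns - LD. \<exists>R\<in>PD. I R m"
    unfolding dominating_def by blast+
  obtain R where R: "R \<in> Pts" "I R l\<^sub>1" "I R l\<^sub>2"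
    using projective_plane_lines_meet[OF plane] l12 \<open>LD \<subseteq> Lns\<close> by blast
  have "R \<notin> PD" using no_meet R by blast
  have fin: "finite PD" "finite LD"
    using plane \<open>PD \<subseteq> Pts\<close> \<open>LD \<subseteq> Lns\<close> finite_subset
    unfolding projective_plane_def by auto
  have bigger: "dominating Pts Lns I (insert R PD) LD"
    using dom R(1) unfolding dominating_def by blast
  have "\<forall>m\<in>Lns - (LD - {l\<^sub>1, l\<^sub>2}). \<exists>R'\<in>insert R PD. I R' m"
    using blocked R by blast
  with \<open>PD \<subseteq> Pts\<close> \<open>LD \<subseteq> Lns\<close> R(1) cover
  have smaller: "dominating Pts Lns I (insert R PD) (LD - {l\<^sub>1, l\<^sub>2})"
    by (intro dominating_if_lines_cover) auto
  have "card {l\<^sub>1, l\<^sub>2} = 2" "{l\<^sub>1, l\<^sub>2} \<subseteq> LD" using l12 by auto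
  then have "card (LD - {l\<^sub>1, l\<^sub>2}) + 2 = card LD"
    using fin card_Diff_subset[of "{l\<^sub>1, l\<^sub>2}" LD] card_mono[of LD "{l\<^sub>1, l\<^sub>2}"] by simp
  moreover have "card (insert R PD) = card PD + 1"
    using fin \<open>R \<notin> PD\<close> by simp
  moreover have "card PD + card LD \<le> card (insert R PD) + card (LD - {l\<^sub>1, l\<^sub>2})"
    using stable_dominating_no_shrink_after_growth[OF stable _ _ bigger _ _ _ smaller]
      calculation by auto
  ultimately show False by linarith
qed

lemma stable_dominating_pencil_extra_line:
  assumes plane: "projective_plane Pts Lns I q" and P: "P \<in> Pts"
    and stable: "stable_dominating Pts Lns I PD LD"
    and pen: "pencil Lns I P \<subseteq> LD"
    and l: "l \<in> LD - pencil Lns I P"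
  shows "LD = pencil Lns I P \<union> {l} \<and> (\<forall>Q\<in>PD. \<not> I Q l)"
proof -
  have min: "minimal_dominating Pts Lns I PD LD"
    using stable_dominating_imp_minimal[OF stable] .
  have pencil_cover: "\<forall>R\<in>Pts. \<exists>m\<in>pencil Lns I P. I R m"
    using pencil_covers_points[OF plane P] by blast
  have unmet: "\<forall>Q\<in>PD. \<not> I Q l'" if "l' \<in> LD - pencil Lns I P" for l'
    using minimal_dominating_removable_line_unmet[OF min] that pencil_cover pen by blast
  have "l' = l" if "l' \<in> LD - pencil Lns I P" for l'
    using stable_dominating_removable_lines_meet_in_PD[OF plane stable, of l' l]
      unmet[OF l] that l pencil_cover pen by blast
  then show ?thesis using unmet[OF l] l pen by blast
qed

lemma dominating_pencil_blocking_set: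
  assumes "dominating Pts Lns I PD LD" and "PD \<union> {P} \<subseteq> Pts'"
  shows "blocking_set Pts' (Lns - (LD - pencil Lns I P)) I (PD \<union> {P})"
  using assms unfolding blocking_set_def dominating_def pencil_def by blast

lemma minimal_dominating_pencil_essential:
  assumes min: "minimal_dominating Pts Lns I PD LD"
    and pen: "pencil Lns I P \<subseteq> LD"
    and cover: "\<forall>R\<in>Pts. \<exists>l\<in>LD. I R l"
    and Q: "Q \<in> PD"
  shows "essential Pts' (Lns - (LD - pencil Lns I P)) I (PD \<union> {P}) Q"
proof -
  obtain m where m: "m \<in> Lns - LD" "I Q m" "\<forall>Q'\<in>PD. I Q' m \<longrightarrow> Q' = Q"
    using minimal_dominating_private_line[OF min cover Q] by blast
  have "\<not> I P m" using m pen unfolding pencil_def by auto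
  with m have "\<not> blocking_set Pts' (Lns - (LD - pencil Lns I P)) I (PD \<union> {P} - {Q})"
    unfolding blocking_set_def by blast
  then show ?thesis unfolding essential_def using Q by blast
qed

theorem lemma2:
  fixes Pts :: "'p set" and Lns :: "'l set" and I :: "'p \<Rightarrow> 'l \<Rightarrow> bool"
    and q :: nat and PD :: "'p set" and LD :: "'l set" and P :: 'p
  assumes plane: "projective_plane Pts Lns I q"
    and stable: "stable_dominating Pts Lns I PD LD"
    and size: "card PD + card LD < 3 * q - 1"
    and P: "P \<in> Pts"
    and pencil_count: "card (pencil Lns I P \<inter> LD) = q + 1"
  shows "(LD = pencil Lns I P \<and> P \<notin> PD \<and>
           blocking_set Pts Lns I (PD \<union> {P}) \<and>
           (\<forall>Q\<in>PD \<union> {P}. Q \<noteq> P \<longrightarrow> essential Pts Lns I (PD \<union> {P}) Q))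
       \<or> (\<exists>!l. l \<in> Lns \<and> \<not> I P l \<and> LD = pencil Lns I P \<union> {l} \<and> P \<notin> PD \<and>
           blocking_set (aff_points Pts I l) (aff_lines Lns l) I (PD \<union> {P}) \<and>
           (\<forall>Q\<in>PD \<union> {P}. Q \<noteq> P \<longrightarrow>
              essential (aff_points Pts I l) (aff_lines Lns l) I (PD \<union> {P}) Q))"
proof -
  let ?pen = "pencil Lns I P"
  have min: "minimal_dominating Pts Lns I PD LD"
    using stable_dominating_imp_minimal[OF stable] .
  have dom: "dominating Pts Lns I PD LD"
    using minimal_dominating_imp_dominating[OF min] .
  then have PD: "PD \<subseteq> Pts" unfolding dominating_def by blast
  have pen: "?pen \<subseteq> LD"
    using pencil_subset_if_card_inter[OF plane P pencil_count] .
  have cover: "\<forall>R\<in>Pts. \<exists>l\<in>LD. I R l"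
    using pencil_covers_points[OF plane P] pen by blast
  have "P \<notin> PD"
    using minimal_dominating_private_line[OF min cover] pen unfolding pencil_def by blast
  have blocking_essential: "blocking_set Pts' (Lns - (LD - ?pen)) I (PD \<union> {P}) \<and>
      (\<forall>Q\<in>PD \<union> {P}. Q \<noteq> P \<longrightarrow> essential Pts' (Lns - (LD - ?pen)) I (PD \<union> {P}) Q)"
    if "PD \<union> {P} \<subseteq> Pts'" for Pts'
    using dominating_pencil_blocking_set[OF dom that]
      minimal_dominating_pencil_essential[OF min pen cover] by blast
  show ?thesis
  proof (cases "LD = ?pen")
    case True
    then show ?thesis using blocking_essential[of Pts] PD P \<open>P \<notin> PD\<close> by simp
  next
    case False
    then obtain l where l: "l \<in> LD - ?pen" using pen by blast
    then have LD_eq: "LD = ?pen \<union> {l}" and unmet: "\<forall>Q\<in>PD. \<not> I Q l"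
      using stable_dominating_pencil_extra_line[OF plane P stable pen] by blast+
    have "l \<in> Lns" "\<not> I P l" using l dom unfolding dominating_def pencil_def by auto
    have "Lns - (LD - ?pen) = aff_lines Lns l"
      using l LD_eq unfolding aff_lines_def by auto
    moreover have "PD \<union> {P} \<subseteq> aff_points Pts I l"
      using PD P \<open>\<not> I P l\<close> unmet unfolding aff_points_def by auto
    ultimately show ?thesis
      using blocking_essential \<open>l \<in> Lns\<close> \<open>\<not> I P l\<close> LD_eq \<open>P \<notin> PD\<close>
      by (intro disjI2 ex1I[of _ l]) (auto simp: pencil_def)
  qed
qed

end
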